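(* Consider the first-order quasi-linear system for $U=(U_1,U_2,U_3,U_4)^t=(\theta,\alpha,H,P)^t$ as functions of $(r,\phi)$, $r>0$: $$A(r,\phi,U)U_r+B(r,\phi,U)U_\phi+C(r,\phi,U)U=0,$$ with $s=\sin(\theta-\phi)$, $c=\cos(\theta-\phi)$ and $$A=\begin{pmatrix}\frac13sH+c\alpha& s&0&0\\ -c\alpha&s&0&0\\ 0&6s\alpha&-c\alpha&s\\ 2c\alpha^2&2s\alpha&-\frac23sH-c\alpha&-s\end{pmatrix},\quad B=\frac1r\begin{pmatrix}-\frac13cH+s\alpha&-c&0&0\\ -s\alpha&-c&0&0\\ 0&-6c\alpha&-s\alpha&-c\\ 2s\alpha^2&-2c\alpha&\frac23cH-s\alpha&c\end{pmatrix},$$ $$C=-\begin{pmatrix}0&-\alpha&0&0\\0&2\alpha&0&0\\0&4\alpha^2&\alpha H&0\\0&0&\alpha H&0\end{pmatrix}.$$ Let $U$ and $V$ be smooth solutions on a neighborhood of the curve $\{r=\mathbf{c}\}$, $\mathbf{c}>0$, such that $\det A(r,\phi,U)\neq0$ on this curve and $U(\mathbf{c},\phi)=V(\mathbf{c},\phi)$ for all $\phi$. Then $U=V$ on a neighborhood of the curve $r=\mathbf{c}$.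
   Context: This system is the one satisfied by $U=(\theta,\alpha,H,-N^\perp\alpha)$ for an absolute $E_1$-minimizing graph in the Heisenberg group, written in polar coordinates; one has $\det A=s^2(\frac13sH+2c\alpha)(\frac23sH+2c\alpha)$. *)

theory Defs
  imports "HOL-Analysis.Analysis"
begin

fun Ck_on :: "nat \<Rightarrow> 'a::real_normed_vector set \<Rightarrow> ('a \<Rightarrow> 'b::real_normed_vector) \<Rightarrow> bool" where
  "Ck_on 0 S f = continuous_on S f"
| "Ck_on (Suc k) S f =
     (\<exists>f'. (\<forall>x\<in>S. (f has_derivative f' x) (at x)) \<and> (\<forall>v. Ck_on k S (\<lambda>x. f' x v)))"

definition smooth_on :: "'a::real_normed_vector set \<Rightarrow> ('a \<Rightarrow> 'b::real_normed_vector) \<Rightarrow> bool" where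
  "smooth_on S f \<longleftrightarrow> (\<forall>k. Ck_on k S f)"

text \<open>Partial derivatives in the polar coordinates (r, phi); points are pairs (r, phi).\<close>
definition d_r :: "(real \<times> real \<Rightarrow> real^4) \<Rightarrow> real \<times> real \<Rightarrow> real^4" where
  "d_r U p = frechet_derivative U (at p) (1, 0)"

definition d_phi :: "(real \<times> real \<Rightarrow> real^4) \<Rightarrow> real \<times> real \<Rightarrow> real^4" where
  "d_phi U p = frechet_derivative U (at p) (0, 1)"

definition matA :: "real \<Rightarrow> real \<Rightarrow> real^4 \<Rightarrow> real^4^4" where
  "matA r phi u = (let th = u$1; al = u$2; H = u$3; s = sin (th - phi); c = cos (th - phi) in
     vector [ vector [s* H/3 + c* al, s, 0, 0],
              vector [- c* al, s, 0, 0],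
              vector [0, 6* s* al, - c* al, s],
              vector [2* c* al^2, 2* s* al, - (2/3)* s* H - c* al, - s] ])"

definition matB :: "real \<Rightarrow> real \<Rightarrow> real^4 \<Rightarrow> real^4^4" where
  "matB r phi u = (let th = u$1; al = u$2; H = u$3; s = sin (th - phi); c = cos (th - phi) in
     (1 / r) *\<^sub>R
     vector [ vector [- c* H/3 + s* al, - c, 0, 0],
              vector [- s* al, - c, 0, 0],
              vector [0, - 6* c* al, - s* al, - c],
              vector [2* s* al^2, - 2* c* al, (2/3)* c* H - s* al, c] ])"

definition matC :: "real \<Rightarrow> real \<Rightarrow> real^4 \<Rightarrow> real^4^4" where
  "matC r phi u = (let al = u$2; H = u$3 in
     - vector [ vector [0, - al, 0, 0],
                vector [0, 2* al, 0, 0],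
                vector [0, 4* al^2, al* H, 0],
                vector [0, 0, al* H, 0] ])"

definition solves_on :: "(real \<times> real) set \<Rightarrow> (real \<times> real \<Rightarrow> real^4) \<Rightarrow> bool" where
  "solves_on S U \<longleftrightarrow> (\<forall>p\<in>S.
      matA (fst p) (snd p) (U p) *v d_r U p + matB (fst p) (snd p) (U p) *v d_phi U p
      + matC (fst p) (snd p) (U p) *v U p = 0)"

end

theory Submission
  imports Defs
begin

text \<open>Multiplying the system by the rows \<open>\<lambda>\<^sub>i\<close> of \<open>char_covectors\<close> collapses both
  coefficient matrices onto a single row \<open>l\<^sub>i\<close> of \<open>char_forms\<close>: \<open>\<lambda>\<^sub>i A = a\<^sub>i l\<^sub>i\<close> and
  \<open>\<lambda>\<^sub>i B = b\<^sub>i l\<^sub>i\<close>. So every solution satisfies four transport equations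
  \<open>l\<^sub>i(U) \<bullet> (a\<^sub>i U\<^sub>r + b\<^sub>i U\<^sub>\<phi>) = f\<^sub>i(U)\<close>, and \<open>det A \<noteq> 0\<close> makes every \<open>a\<^sub>i\<close> nonzero:
  no characteristic is tangent to the circle \<open>r = c\<close>. For two solutions, the derivative of
  \<open>q\<^sub>i = l\<^sub>i(U) \<bullet> (U - V)\<close> in the direction \<open>(1, b\<^sub>i / a\<^sub>i)\<close> is bounded by
  \<open>K (\<bar>q\<^sub>1\<bar> + \<dots> + \<bar>q\<^sub>4\<bar>)\<close> near the circle: the derivatives of \<open>U\<close> cancel, and what is left is
  a derivative-free expression evaluated at \<open>U\<close> minus the same expression at \<open>V\<close>. A maximum
  principle for \<open>exp (- k \<bar>r - c\<bar>) q\<^sub>i\<close> on a diamond \<open>L \<bar>r - c\<bar> + \<bar>\<phi> - \<phi>\<^sub>0\<bar> \<le> \<rho>\<close>, whose sides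
  are steeper than all characteristics, gives \<open>q = 0\<close> there, and \<open>U = V\<close> because the \<open>l\<^sub>i\<close> are
  linearly independent.\<close>

lemma vector_4 [simp]:
  "(vector [x, y, z, w] :: 'a::zero ^ 4) $ 1 = x"
  "(vector [x, y, z, w] :: 'a::zero ^ 4) $ 2 = y"
  "(vector [x, y, z, w] :: 'a::zero ^ 4) $ 3 = z"
  "(vector [x, y, z, w] :: 'a::zero ^ 4) $ 4 = w"
  unfolding vector_def by simp_all

lemma vector_4_eq_axis:
  "(vector [a, b, c, d] :: 'a::real_vector ^ 4) = axis 1 a + axis 2 b + axis 3 c + axis 4 d"
  by (simp add: vec_eq_iff forall_4 axis_def)

lemma bounded_linear_axis: "bounded_linear (axis k :: 'a::real_normed_vector \<Rightarrow> 'a ^ 'n)"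
proof
  show "axis k (x + y) = axis k x + axis k y" "axis k (r *\<^sub>R x) = r *\<^sub>R axis k x"
    for x y :: 'a and r
    by (simp_all add: vec_eq_iff axis_def)
  show "\<exists>K. \<forall>x. norm (axis k x :: 'a ^ 'n) \<le> norm x * K"
  proof (intro exI allI)
    fix x :: 'a
    have "norm (axis k x :: 'a ^ 'n) \<le> (\<Sum>i\<in>UNIV. norm (axis k x $ i))"
      unfolding norm_vec_def by (rule L2_set_le_sum) simp
    also have "\<dots> = norm x"
      by (simp add: axis_def if_distrib cong: if_cong)
    finally show "norm (axis k x :: 'a ^ 'n) \<le> norm x * 1"
      by simp
  qed
qed

lemma continuous_on_vector_4 [continuous_intros]:
  fixes f1 f2 f3 f4 :: "'a::topological_space \<Rightarrow> 'b::real_normed_vector"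
  assumes "continuous_on S f1" "continuous_on S f2" "continuous_on S f3" "continuous_on S f4"
  shows "continuous_on S (\<lambda>x. vector [f1 x, f2 x, f3 x, f4 x] :: 'b ^ 4)"
  unfolding vector_4_eq_axis
  by (intro continuous_intros bounded_linear.continuous_on[OF bounded_linear_axis] assms)

lemma has_derivative_vector_4 [derivative_intros]:
  fixes f1 f2 f3 f4 :: "'a::real_normed_vector \<Rightarrow> 'b::real_normed_vector"
  assumes "(f1 has_derivative f1') F" "(f2 has_derivative f2') F"
    and "(f3 has_derivative f3') F" "(f4 has_derivative f4') F"
  shows "((\<lambda>x. vector [f1 x, f2 x, f3 x, f4 x] :: 'b ^ 4) has_derivative
    (\<lambda>h. vector [f1' h, f2' h, f3' h, f4' h])) F"
  unfolding vector_4_eq_axis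
  by (intro derivative_intros bounded_linear.has_derivative[OF bounded_linear_axis] assms)

lemmas has_derivative_vec_nth [derivative_intros] =
  bounded_linear.has_derivative[OF bounded_linear_vec_nth]

lemma linear_apply_pair: "linear f \<Longrightarrow> f (a, b) = a *\<^sub>R f (1, 0) + b *\<^sub>R f (0, 1)"
  using linear_add[of f "(a, 0)" "(0, b)"] linear_scale[of f a "(1, 0)"]
    linear_scale[of f b "(0, 1)"]
  by simp

lemma finite_family_attains_sup:
  fixes f :: "'i::finite \<Rightarrow> 'a::topological_space \<Rightarrow> real"
  assumes "compact S" "S \<noteq> {}" "\<And>i. continuous_on S (f i)"
  obtains i x where "x \<in> S" "\<And>j y. y \<in> S \<Longrightarrow> f j y \<le> f i x"
proof -
  obtain m where m: "\<And>i. m i \<in> S \<and> (\<forall>y\<in>S. f i y \<le> f i (m i))"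
    using continuous_attains_sup[OF assms(1,2) assms(3)] by metis
  obtain i where "\<And>j. f j (m j) \<le> f i (m i)"
    using Max_in[of "range (\<lambda>j. f j (m j))"] Max_ge[of "range (\<lambda>j. f j (m j))"] by fastforce
  with m show ?thesis by (meson order_trans that)
qed

section \<open>Differences bounded by a gauge\<close>

text \<open>Continuity is part of the definition so that, on compact sets, the predicate is closed
  under bounded bilinear products.\<close>

definition diff_bounded_by ::
    "'a::topological_space set \<Rightarrow> ('a \<Rightarrow> real) \<Rightarrow> ('a \<Rightarrow> 'b::real_normed_vector) \<Rightarrow> ('a \<Rightarrow> 'b) \<Rightarrow> bool"
  where "diff_bounded_by S e f g \<longleftrightarrow>
    continuous_on S f \<and> continuous_on S g \<and> (\<exists>K. \<forall>x\<in>S. norm (f x - g x) \<le> K * e x)"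

lemma diff_bounded_byE:
  assumes "diff_bounded_by S e f g"
  obtains K where "\<And>x. x \<in> S \<Longrightarrow> norm (f x - g x) \<le> K * e x"
  using assms unfolding diff_bounded_by_def by blast

lemma diff_bounded_by_refl: "continuous_on S f \<Longrightarrow> diff_bounded_by S e f f"
  unfolding diff_bounded_by_def by (auto intro: exI[of _ 0])

lemma diff_bounded_by_add:
  assumes "diff_bounded_by S e f g" "diff_bounded_by S e f' g'"
  shows "diff_bounded_by S e (\<lambda>x. f x + f' x) (\<lambda>x. g x + g' x)"
proof -
  obtain K K' where "\<And>x. x \<in> S \<Longrightarrow> norm (f x - g x) \<le> K * e x"
    and "\<And>x. x \<in> S \<Longrightarrow> norm (f' x - g' x) \<le> K' * e x"
    using assms by (metis diff_bounded_byE)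
  then have "norm (f x + f' x - (g x + g' x)) \<le> (K + K') * e x" if "x \<in> S" for x
    using norm_triangle_ineq[of "f x - g x" "f' x - g' x"] that
    by (fastforce simp: algebra_simps)
  with assms show ?thesis
    unfolding diff_bounded_by_def by (auto intro: continuous_intros)
qed

lemma (in bounded_linear) diff_bounded_by:
  assumes "diff_bounded_by S e g g'"
  shows "diff_bounded_by S e (\<lambda>x. f (g x)) (\<lambda>x. f (g' x))"
proof -
  obtain K where K: "\<And>x. x \<in> S \<Longrightarrow> norm (g x - g' x) \<le> K * e x"
    using assms by (metis diff_bounded_byE)
  obtain B where B: "\<And>y. norm (f y) \<le> norm y * B" "B \<ge> 0"
    using nonneg_bounded by blast
  have "norm (f (g x) - f (g' x)) \<le> (B * K) * e x" if "x \<in> S" for x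
  proof -
    have "norm (f (g x) - f (g' x)) \<le> norm (g x - g' x) * B"
      by (metis B(1) diff)
    also have "\<dots> \<le> K * e x * B"
      using K[OF that] B(2) by (rule mult_right_mono)
    finally show ?thesis
      by (simp add: ac_simps)
  qed
  with assms show ?thesis
    unfolding diff_bounded_by_def
    by (auto intro: continuous_on_compose2[OF continuous_on] exI[of _ "B * K"])
qed

lemma (in bounded_bilinear) diff_bounded_by:
  assumes "compact S" "diff_bounded_by S e f g" "diff_bounded_by S e f' g'"
  shows "diff_bounded_by S e (\<lambda>x. prod (f x) (f' x)) (\<lambda>x. prod (g x) (g' x))"
proof -
  obtain K K' where K: "\<And>x. x \<in> S \<Longrightarrow> norm (f x - g x) \<le> K * e x"
    and K': "\<And>x. x \<in> S \<Longrightarrow> norm (f' x - g' x) \<le> K' * e x"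
    using assms(2,3) by (metis diff_bounded_byE)
  obtain M M' where M: "\<And>x. x \<in> S \<Longrightarrow> norm (f x) \<le> M"
    and M': "\<And>x. x \<in> S \<Longrightarrow> norm (g' x) \<le> M'"
    using assms continuous_on_compact_bound unfolding diff_bounded_by_def by metis
  obtain B where B: "\<And>a b. norm (prod a b) \<le> norm a * norm b * B" "B \<ge> 0"
    using nonneg_bounded by blast
  have "norm (prod (f x) (f' x) - prod (g x) (g' x)) \<le> ((M * K' + K * M') * B) * e x"
    if "x \<in> S" for x
  proof -
    have "prod (f x) (f' x) - prod (g x) (g' x)
        = prod (f x) (f' x - g' x) + prod (f x - g x) (g' x)"
      by (simp add: diff_right diff_left)
    then have "norm (prod (f x) (f' x) - prod (g x) (g' x))
        \<le> norm (f x) * norm (f' x - g' x) * B + norm (f x - g x) * norm (g' x) * B"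
      by (metis B(1) add_mono norm_triangle_le)
    also have "\<dots> \<le> M * (K' * e x) * B + K * e x * M' * B"
    proof -
      have "norm (f x) * norm (f' x - g' x) \<le> M * (K' * e x)"
        using M K' that by (meson mult_mono norm_ge_zero order_trans)
      moreover have "norm (f x - g x) * norm (g' x) \<le> K * e x * M'"
        using M' K that by (meson mult_mono norm_ge_zero order_trans)
      ultimately show ?thesis
        using B(2) by (intro add_mono mult_right_mono)
    qed
    finally show ?thesis
      by (simp add: algebra_simps)
  qed
  with assms show ?thesis
    unfolding diff_bounded_by_def by (auto intro: continuous_on)
qed

lemmas diff_bounded_by_mult = bounded_bilinear.diff_bounded_by[OF bounded_bilinear_mult]
lemmas diff_bounded_by_scaleR = bounded_bilinear.diff_bounded_by[OF bounded_bilinear_scaleR]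
lemmas diff_bounded_by_inner = bounded_bilinear.diff_bounded_by[OF bounded_bilinear_inner]
lemmas diff_bounded_by_vec_nth = bounded_linear.diff_bounded_by[OF bounded_linear_vec_nth]
lemmas diff_bounded_by_minus =
  bounded_linear.diff_bounded_by[OF bounded_linear_minus[OF bounded_linear_ident]]

lemma diff_bounded_by_diff:
  assumes "diff_bounded_by S e f g" "diff_bounded_by S e f' g'"
  shows "diff_bounded_by S e (\<lambda>x. f x - f' x) (\<lambda>x. g x - g' x)"
  using diff_bounded_by_add[OF assms(1) diff_bounded_by_minus[OF assms(2)]] by simp

lemma diff_bounded_by_divide_const:
  fixes f g :: "'a::topological_space \<Rightarrow> real"
  shows "diff_bounded_by S e f g \<Longrightarrow> diff_bounded_by S e (\<lambda>x. f x / c) (\<lambda>x. g x / c)"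
  by (rule bounded_linear.diff_bounded_by[OF bounded_linear_divide])

lemma abs_sin_diff_le: "\<bar>sin x - sin y\<bar> \<le> \<bar>x - y\<bar>" for x y :: real
proof -
  have "\<bar>sin x - sin y\<bar> = 2 * \<bar>sin ((x - y) / 2)\<bar> * \<bar>cos ((x + y) / 2)\<bar>"
    by (simp add: sin_diff_sin abs_mult)
  also have "\<dots> \<le> 2 * \<bar>(x - y) / 2\<bar> * 1"
    by (intro mult_mono abs_sin_x_le_abs_x) auto
  finally show ?thesis
    by simp
qed

lemma abs_cos_diff_le: "\<bar>cos x - cos y\<bar> \<le> \<bar>x - y\<bar>" for x y :: real
  using abs_sin_diff_le[of "x + pi / 2" "y + pi / 2"] by (simp add: sin_add)

lemma diff_bounded_by_lipschitz_comp:
  fixes f g :: "'a::topological_space \<Rightarrow> real"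
  assumes "diff_bounded_by S e f g" "continuous_on UNIV h" "\<And>x y. \<bar>h x - h y\<bar> \<le> \<bar>x - y\<bar>"
  shows "diff_bounded_by S e (\<lambda>x. h (f x)) (\<lambda>x. h (g x))"
proof -
  obtain K where "\<And>x. x \<in> S \<Longrightarrow> \<bar>f x - g x\<bar> \<le> K * e x"
    using assms(1) by (metis diff_bounded_byE real_norm_def)
  then have "\<And>x. x \<in> S \<Longrightarrow> norm (h (f x) - h (g x)) \<le> K * e x"
    using assms(3) order_trans real_norm_def by metis
  with assms(1,2) show ?thesis
    unfolding diff_bounded_by_def by (auto intro: continuous_on_compose2[OF assms(2)])
qed

lemma diff_bounded_by_sin:
  fixes f g :: "'a::topological_space \<Rightarrow> real"
  shows "diff_bounded_by S e f g \<Longrightarrow> diff_bounded_by S e (\<lambda>x. sin (f x)) (\<lambda>x. sin (g x))"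
  by (rule diff_bounded_by_lipschitz_comp) (auto intro: continuous_intros abs_sin_diff_le)

lemma diff_bounded_by_cos:
  fixes f g :: "'a::topological_space \<Rightarrow> real"
  shows "diff_bounded_by S e f g \<Longrightarrow> diff_bounded_by S e (\<lambda>x. cos (f x)) (\<lambda>x. cos (g x))"
  by (rule diff_bounded_by_lipschitz_comp) (auto intro: continuous_intros abs_cos_diff_le)

lemma diff_bounded_by_vector_4:
  assumes "diff_bounded_by S e f1 g1" "diff_bounded_by S e f2 g2"
    and "diff_bounded_by S e f3 g3" "diff_bounded_by S e f4 g4"
  shows "diff_bounded_by S e (\<lambda>x. vector [f1 x, f2 x, f3 x, f4 x] :: 'b::real_normed_vector ^ 4)
    (\<lambda>x. vector [g1 x, g2 x, g3 x, g4 x])"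
  unfolding vector_4_eq_axis
  by (intro diff_bounded_by_add bounded_linear.diff_bounded_by[OF bounded_linear_axis] assms)

lemma diff_bounded_by_vec_lambda:
  fixes f g :: "'i::finite \<Rightarrow> 'a::topological_space \<Rightarrow> 'b::real_normed_vector"
  assumes "\<And>i. diff_bounded_by S e (f i) (g i)"
  shows "diff_bounded_by S e (\<lambda>x. \<chi> i. f i x) (\<lambda>x. \<chi> i. g i x)"
proof -
  obtain K where K: "\<And>i x. x \<in> S \<Longrightarrow> norm (f i x - g i x) \<le> K i * e x"
    using assms unfolding diff_bounded_by_def by metis
  have "norm ((\<chi> i. f i x) - (\<chi> i. g i x)) \<le> (\<Sum>i\<in>UNIV. K i) * e x" if "x \<in> S" for x
  proof -
    have "norm ((\<chi> i. f i x) - (\<chi> i. g i x)) \<le> (\<Sum>i\<in>UNIV. norm (f i x - g i x))"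
      unfolding norm_vec_def by (rule order_trans[OF L2_set_le_sum]) simp_all
    also have "\<dots> \<le> (\<Sum>i\<in>UNIV. K i * e x)"
      using K[OF that] by (rule sum_mono)
    finally show ?thesis
      by (simp add: sum_distrib_right)
  qed
  with assms show ?thesis
    unfolding diff_bounded_by_def by (auto intro: continuous_on_vec_lambda)
qed

lemmas diff_bounded_by_intros =
  diff_bounded_by_refl diff_bounded_by_add diff_bounded_by_diff diff_bounded_by_minus
  diff_bounded_by_mult diff_bounded_by_scaleR diff_bounded_by_inner diff_bounded_by_vec_nth
  diff_bounded_by_divide_const diff_bounded_by_sin diff_bounded_by_cos diff_bounded_by_vector_4
  diff_bounded_by_vec_lambda

section \<open>A maximum principle for transport inequalities\<close>

definition diamond :: "real \<Rightarrow> real \<Rightarrow> real \<Rightarrow> real \<Rightarrow> (real \<times> real) set" where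
  "diamond c \<phi>0 \<rho> L = {p. L * \<bar>fst p - c\<bar> + \<bar>snd p - \<phi>0\<bar> \<le> \<rho>}"

lemma compact_diamond:
  assumes "L > 0"
  shows "compact (diamond c \<phi>0 \<rho> L)"
proof -
  have "diamond c \<phi>0 \<rho> L \<subseteq> {c - \<rho> / L .. c + \<rho> / L} \<times> {\<phi>0 - \<rho> .. \<phi>0 + \<rho>}"
  proof
    fix p assume "p \<in> diamond c \<phi>0 \<rho> L"
    moreover have "0 \<le> L * \<bar>fst p - c\<bar>"
      using assms by simp
    ultimately have "L * \<bar>fst p - c\<bar> \<le> \<rho>" "\<bar>snd p - \<phi>0\<bar> \<le> \<rho>"
      by (auto simp: diamond_def)
    then have "\<bar>fst p - c\<bar> \<le> \<rho> / L" "\<bar>snd p - \<phi>0\<bar> \<le> \<rho>"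
      using assms by (simp_all add: pos_le_divide_eq mult.commute)
    then show "p \<in> {c - \<rho> / L .. c + \<rho> / L} \<times> {\<phi>0 - \<rho> .. \<phi>0 + \<rho>}"
      by (cases p) (auto simp: abs_le_iff)
  qed
  moreover have "closed (diamond c \<phi>0 \<rho> L)"
    unfolding diamond_def by (intro closed_Collect_le continuous_intros)
  ultimately show ?thesis
    by (metis compact_Icc compact_Times compact_Int_closed inf.absorb_iff2)
qed

lemma diamond_subset_cball:
  assumes "L \<ge> 1"
  shows "diamond c \<phi>0 \<rho> L \<subseteq> cball (c, \<phi>0) \<rho>"
proof
  fix p assume "p \<in> diamond c \<phi>0 \<rho> L"
  moreover have "\<bar>fst p - c\<bar> \<le> L * \<bar>fst p - c\<bar>"
    using assms by (simp add: mult_le_cancel_right1)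
  moreover have "dist (c, \<phi>0) p \<le> \<bar>fst p - c\<bar> + \<bar>snd p - \<phi>0\<bar>"
    using sqrt_sum_squares_le_sum_abs[of "fst p - c" "snd p - \<phi>0"]
    by (cases p) (simp add: dist_Pair_Pair dist_real_def power2_commute)
  ultimately show "p \<in> cball (c, \<phi>0) \<rho>"
    by (auto simp: diamond_def)
qed

lemma ball_subset_diamond:
  assumes "L \<ge> 0"
  shows "ball (c, \<phi>0) (\<rho> / (1 + L)) \<subseteq> diamond c \<phi>0 \<rho> L"
proof
  fix p assume "p \<in> ball (c, \<phi>0) (\<rho> / (1 + L))"
  then have "\<bar>fst p - c\<bar> < \<rho> / (1 + L)" "\<bar>snd p - \<phi>0\<bar> < \<rho> / (1 + L)"
    using dist_fst_le[of "(c, \<phi>0)" p] dist_snd_le[of "(c, \<phi>0)" p]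
    by (auto simp: dist_real_def abs_minus_commute)
  then have "L * \<bar>fst p - c\<bar> + \<bar>snd p - \<phi>0\<bar> \<le> L * (\<rho> / (1 + L)) + \<rho> / (1 + L)"
    using assms by (intro add_mono mult_left_mono) auto
  also have "\<dots> = (1 + L) * (\<rho> / (1 + L))"
    by (simp add: algebra_simps add_divide_distrib)
  also have "\<dots> = \<rho>"
    using assms by simp
  finally show "p \<in> diamond c \<phi>0 \<rho> L"
    by (simp add: diamond_def)
qed

lemma diamond_segment:
  assumes "p \<in> diamond c \<phi>0 \<rho> L" "\<bar>b\<bar> \<le> L" "0 \<le> t" "t \<le> \<bar>fst p - c\<bar>"
  defines "v \<equiv> (sgn (fst p - c), sgn (fst p - c) * b)"
  shows "\<bar>fst (p - t *\<^sub>R v) - c\<bar> = \<bar>fst p - c\<bar> - t" and "p - t *\<^sub>R v \<in> diamond c \<phi>0 \<rho> L"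
proof -
  have "fst (p - t *\<^sub>R v) - c = sgn (fst p - c) * (\<bar>fst p - c\<bar> - t)"
    unfolding v_def by (simp add: algebra_simps abs_mult_sgn)
  then show *: "\<bar>fst (p - t *\<^sub>R v) - c\<bar> = \<bar>fst p - c\<bar> - t"
    using assms(3,4) by (auto simp: abs_mult abs_sgn_eq)
  have "\<bar>snd (p - t *\<^sub>R v) - \<phi>0\<bar> \<le> \<bar>snd p - \<phi>0\<bar> + t * L"
  proof -
    have "\<bar>t * (sgn (fst p - c) * b)\<bar> \<le> t * L"
      using assms(2,3) by (auto simp: abs_mult abs_sgn_eq intro: mult_left_mono)
    then show ?thesis unfolding v_def by simp
  qed
  then have "L * \<bar>fst (p - t *\<^sub>R v) - c\<bar> + \<bar>snd (p - t *\<^sub>R v) - \<phi>0\<bar>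
      \<le> L * (\<bar>fst p - c\<bar> - t) + (\<bar>snd p - \<phi>0\<bar> + t * L)"
    unfolding * by linarith
  also have "\<dots> = L * \<bar>fst p - c\<bar> + \<bar>snd p - \<phi>0\<bar>"
    by (simp add: algebra_simps)
  finally show "p - t *\<^sub>R v \<in> diamond c \<phi>0 \<rho> L"
    using assms(1) by (simp add: diamond_def)
qed

lemma has_real_derivative_weighted_path:
  assumes "(q has_derivative Dq) (at p)"
  shows "((\<lambda>t. exp (- K * (d - t)) * q (p - t *\<^sub>R v)) has_real_derivative
    exp (- K * d) * (K * q p - Dq v)) (at 0)"
proof -
  have "((\<lambda>t. p - t *\<^sub>R v) has_derivative (\<lambda>t. - (t *\<^sub>R v))) (at 0)"
    by (auto intro!: derivative_eq_intros)
  moreover have "(q has_derivative Dq) (at (p - 0 *\<^sub>R v))"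
    using assms by simp
  ultimately have "((\<lambda>t. q (p - t *\<^sub>R v)) has_derivative (\<lambda>t. Dq (- (t *\<^sub>R v)))) (at 0)"
    by (rule has_derivative_compose)
  moreover have "(\<lambda>t. Dq (- (t *\<^sub>R v))) = (*) (- Dq v)"
    using linear_cmul[OF has_derivative_linear[OF assms], of "- _" v] by (auto simp: fun_eq_iff)
  ultimately have "((\<lambda>t. q (p - t *\<^sub>R v)) has_real_derivative - Dq v) (at 0)"
    by (simp add: has_field_derivative_def)
  then show ?thesis
    by (auto intro!: derivative_eq_intros simp: algebra_simps)
qed

locale transport_system =
  fixes c \<phi>0 \<rho> L K :: real
    and q :: "'i::finite \<Rightarrow> real \<times> real \<Rightarrow> real"
    and Dq :: "'i \<Rightarrow> real \<times> real \<Rightarrow> real \<times> real \<Rightarrow> real"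
    and \<beta> :: "'i \<Rightarrow> real \<times> real \<Rightarrow> real"
  assumes slope_bound_pos: "L > 0"
    and q_deriv: "\<And>i p. p \<in> diamond c \<phi>0 \<rho> L \<Longrightarrow> (q i has_derivative Dq i p) (at p)"
    and slope_bound: "\<And>i p. p \<in> diamond c \<phi>0 \<rho> L \<Longrightarrow> \<bar>\<beta> i p\<bar> \<le> L"
    and transport_bound:
      "\<And>i p. p \<in> diamond c \<phi>0 \<rho> L \<Longrightarrow> \<bar>Dq i p (1, \<beta> i p)\<bar> \<le> K * (\<Sum>j\<in>UNIV. \<bar>q j p\<bar>)"
    and initial_zero: "\<And>i p. p \<in> diamond c \<phi>0 \<rho> L \<Longrightarrow> fst p = c \<Longrightarrow> q i p = 0"
begin

abbreviation D :: "(real \<times> real) set" where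
  "D \<equiv> diamond c \<phi>0 \<rho> L"

definition rate :: real where
  "rate = \<bar>K\<bar> * CARD('i) + 1"

definition weighted :: "'i \<Rightarrow> real \<times> real \<Rightarrow> real" where
  "weighted i p = exp (- rate * \<bar>fst p - c\<bar>) * q i p"

definition back_dir :: "'i \<Rightarrow> real \<times> real \<Rightarrow> real \<times> real" where
  "back_dir i p = (sgn (fst p - c), sgn (fst p - c) * \<beta> i p)"

lemma weighted_attains_max:
  assumes "p \<in> D"
  obtains p1 i1 where "p1 \<in> D" "\<And>j x. x \<in> D \<Longrightarrow> \<bar>weighted j x\<bar> \<le> \<bar>weighted i1 p1\<bar>"
proof -
  have "compact D" "D \<noteq> {}"
    using compact_diamond[OF slope_bound_pos] assms by auto
  moreover have "continuous_on D (q j)" for j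
    using q_deriv by (meson continuous_at_imp_continuous_on has_derivative_continuous)
  then have "continuous_on D (\<lambda>x. \<bar>weighted j x\<bar>)" for j
    unfolding weighted_def by (intro continuous_intros)
  ultimately show ?thesis
    by (rule finite_family_attains_sup) (rule that)
qed

lemma back_path_weighted:
  assumes "p \<in> D" "0 < t" "t \<le> \<bar>fst p - c\<bar>"
  shows "p - t *\<^sub>R back_dir i p \<in> D"
    and "weighted i (p - t *\<^sub>R back_dir i p) =
      exp (- rate * (\<bar>fst p - c\<bar> - t)) * q i (p - t *\<^sub>R back_dir i p)"
  using diamond_segment[OF assms(1) slope_bound[OF assms(1)], of t] assms(2,3)
  by (simp_all add: weighted_def back_dir_def)

lemma weighted_growth_at_max:
  assumes "p \<in> D" "\<And>j. \<bar>weighted j p\<bar> \<le> \<bar>weighted i p\<bar>" "fst p \<noteq> c"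
  shows "sgn (q i p) * (exp (- rate * \<bar>fst p - c\<bar>) * (rate * q i p - Dq i p (back_dir i p)))
    \<ge> \<bar>weighted i p\<bar>"
proof -
  define e where "e = exp (- rate * \<bar>fst p - c\<bar>)"
  have "\<bar>Dq i p (back_dir i p)\<bar> = \<bar>Dq i p (1, \<beta> i p)\<bar>"
    using linear_cmul[OF has_derivative_linear[OF q_deriv[OF assms(1), of i]],
        of "sgn (fst p - c)" "(1, \<beta> i p)"] assms(3)
    by (simp add: back_dir_def abs_mult)
  also have "\<dots> \<le> \<bar>K\<bar> * (\<Sum>j\<in>UNIV. \<bar>q j p\<bar>)"
    using transport_bound[OF assms(1), of i]
    by (meson abs_ge_self mult_right_mono order_trans sum_nonneg abs_ge_zero)
  finally have "e * \<bar>Dq i p (back_dir i p)\<bar> \<le> e * (\<bar>K\<bar> * (\<Sum>j\<in>UNIV. \<bar>q j p\<bar>))"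
    by (simp add: e_def)
  also have "\<dots> = \<bar>K\<bar> * (\<Sum>j\<in>UNIV. \<bar>weighted j p\<bar>)"
    by (simp add: e_def weighted_def abs_mult sum_distrib_left mult.left_commute)
  also have "\<dots> \<le> \<bar>K\<bar> * (CARD('i) * \<bar>weighted i p\<bar>)"
    using sum_mono[of UNIV "\<lambda>j. \<bar>weighted j p\<bar>" "\<lambda>_. \<bar>weighted i p\<bar>"] assms(2)
    by (intro mult_left_mono) auto
  also have "\<dots> = rate * \<bar>weighted i p\<bar> - \<bar>weighted i p\<bar>"
    by (simp add: rate_def algebra_simps)
  finally have bound: "e * \<bar>Dq i p (back_dir i p)\<bar> \<le> rate * \<bar>weighted i p\<bar> - \<bar>weighted i p\<bar>" .
  have "\<bar>sgn (q i p) * (e * Dq i p (back_dir i p))\<bar> \<le> e * \<bar>Dq i p (back_dir i p)\<bar>"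
    by (cases "q i p = 0") (simp_all add: abs_mult e_def)
  then have "sgn (q i p) * (e * Dq i p (back_dir i p)) \<le> e * \<bar>Dq i p (back_dir i p)\<bar>"
    by (rule abs_le_D1)
  moreover have "sgn (q i p) * (e * (rate * q i p)) = rate * \<bar>weighted i p\<bar>"
    by (simp add: e_def weighted_def abs_mult sgn_if)
  moreover have "sgn (q i p) * (e * (rate * q i p - Dq i p (back_dir i p))) =
      sgn (q i p) * (e * (rate * q i p)) - sgn (q i p) * (e * Dq i p (back_dir i p))"
    by (simp add: algebra_simps)
  ultimately show ?thesis
    using bound unfolding e_def[symmetric] by linarith
qed

lemma weighted_max_zero:
  assumes "p \<in> D" "\<And>j x. x \<in> D \<Longrightarrow> \<bar>weighted j x\<bar> \<le> \<bar>weighted i p\<bar>"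
  shows "weighted i p = 0"
proof (rule ccontr)
  assume "weighted i p \<noteq> 0"
  then have "q i p \<noteq> 0"
    by (simp add: weighted_def)
  then have d: "\<bar>fst p - c\<bar> > 0"
    using initial_zero[OF assms(1)] by auto
  define g where "g t = sgn (q i p) *
    (exp (- rate * (\<bar>fst p - c\<bar> - t)) * q i (p - t *\<^sub>R back_dir i p))" for t
  have g0: "g 0 = \<bar>weighted i p\<bar>"
    by (simp add: g_def weighted_def abs_mult sgn_if)
  have g_le: "g t \<le> \<bar>weighted i p\<bar>" if "0 < t" "t \<le> \<bar>fst p - c\<bar>" for t
  proof -
    have "g t = sgn (q i p) * weighted i (p - t *\<^sub>R back_dir i p)"
      using back_path_weighted(2)[OF assms(1) that] by (simp add: g_def)
    also have "\<dots> \<le> \<bar>weighted i (p - t *\<^sub>R back_dir i p)\<bar>"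
      by (simp add: sgn_if abs_ge_minus_self abs_ge_self)
    also have "\<dots> \<le> \<bar>weighted i p\<bar>"
      using assms(2) back_path_weighted(1)[OF assms(1) that] .
    finally show ?thesis .
  qed
  have "(g has_real_derivative sgn (q i p) * (exp (- rate * \<bar>fst p - c\<bar>) *
      (rate * q i p - Dq i p (back_dir i p)))) (at 0)"
    unfolding g_def by (intro DERIV_cmult has_real_derivative_weighted_path q_deriv assms(1))
  moreover have
    "sgn (q i p) * (exp (- rate * \<bar>fst p - c\<bar>) * (rate * q i p - Dq i p (back_dir i p))) > 0"
    using weighted_growth_at_max[of p i] assms d \<open>weighted i p \<noteq> 0\<close> by fastforce
  ultimately obtain \<delta> where \<delta>: "\<delta> > 0" "\<And>h. 0 < h \<Longrightarrow> h < \<delta> \<Longrightarrow> g 0 < g (0 + h)"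
    by (metis DERIV_pos_inc_right)
  define t where "t = min (\<delta> / 2) \<bar>fst p - c\<bar>"
  have "0 < t" "t < \<delta>" "t \<le> \<bar>fst p - c\<bar>"
    using d \<delta>(1) by (auto simp: t_def)
  then show False
    using \<delta>(2)[of t] g0 g_le[of t] by simp
qed

theorem vanishes:
  assumes "p \<in> D"
  shows "q i p = 0"
proof -
  obtain p1 i1 where "p1 \<in> D" and max: "\<And>j x. x \<in> D \<Longrightarrow> \<bar>weighted j x\<bar> \<le> \<bar>weighted i1 p1\<bar>"
    by (rule weighted_attains_max[OF assms]) blast
  then have "weighted i1 p1 = 0"
    by (rule weighted_max_zero)
  then have "weighted i p = 0"
    using max[OF assms, of i] by simp
  then show ?thesis
    by (simp add: weighted_def)
qed

end

section \<open>Characteristic form of the system\<close>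

definition char_forms :: "real^4 \<Rightarrow> real^4^4" where
  "char_forms u = vector [
     vector [1, 0, 0, 0],
     vector [u$3 / 3, 2, 0, 0],
     vector [2 * u$2 * u$3 / 3, 6 * u$2, 2 * u$3 / 3, 2],
     vector [5 * u$2, 0, 1, 0]]"

definition char_covectors :: "real^4 \<Rightarrow> real^4^4" where
  "char_covectors u = vector [
     vector [1, -1, 0, 0],
     vector [1, 1, 0, 0],
     vector [2 * u$2, 0, 1, -1],
     vector [5 * u$2, - u$2, -1/2, -1/2]]"

definition char_dr :: "real \<Rightarrow> real^4 \<Rightarrow> real^4" where
  "char_dr phi u = vector [
     sin (u$1 - phi) * u$3 / 3 + 2 * cos (u$1 - phi) * u$2,
     sin (u$1 - phi),
     sin (u$1 - phi),
     sin (u$1 - phi) * u$3 / 3 + cos (u$1 - phi) * u$2]"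

definition char_dphi :: "real \<Rightarrow> real \<Rightarrow> real^4 \<Rightarrow> real^4" where
  "char_dphi r phi u = (1 / r) *\<^sub>R vector [
     2 * sin (u$1 - phi) * u$2 - cos (u$1 - phi) * u$3 / 3,
     - cos (u$1 - phi),
     - cos (u$1 - phi),
     sin (u$1 - phi) * u$2 - cos (u$1 - phi) * u$3 / 3]"

definition char_source :: "real^4 \<Rightarrow> real^4" where
  "char_source u = vector [
     - 3 * u$2 * u$2,
     u$2 * u$2,
     2 * u$2 * u$2 * u$2,
     - 9 * u$2 * u$2 * u$2 - u$2 * u$3 * u$3]"

lemma char_covectors_matA:
  "char_covectors u $ i v* matA r phi u = char_dr phi u $ i *\<^sub>R char_forms u $ i"
  using exhaust_4[of i] by (elim disjE)
    (simp_all add: vec_eq_iff forall_4 vector_matrix_mult_def sum_4 matA_def char_covectors_def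
      char_dr_def char_forms_def Let_def field_simps power2_eq_square)

lemma char_covectors_matB:
  "char_covectors u $ i v* matB r phi u = char_dphi r phi u $ i *\<^sub>R char_forms u $ i"
  using exhaust_4[of i] by (cases "r = 0"; elim disjE)
    (simp_all add: vec_eq_iff forall_4 vector_matrix_mult_def sum_4 matB_def char_covectors_def
      char_dphi_def char_forms_def Let_def field_simps power2_eq_square)

lemma char_covectors_matC:
  "(char_covectors u $ i v* matC r phi u) \<bullet> u = - char_source u $ i"
  using exhaust_4[of i] by (elim disjE)
    (simp_all add: inner_vec_def vector_matrix_mult_def sum_4 matC_def char_covectors_def
      char_source_def Let_def field_simps power2_eq_square)

lemma char_equation:
  assumes "matA r phi u *v x + matB r phi u *v y + matC r phi u *v u = 0"
  shows "char_forms u $ i \<bullet> (char_dr phi u $ i *\<^sub>R x + char_dphi r phi u $ i *\<^sub>R y)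
    = char_source u $ i"
proof -
  let ?l = "char_covectors u $ i"
  have "0 = ?l \<bullet> (matA r phi u *v x) + ?l \<bullet> (matB r phi u *v y) + ?l \<bullet> (matC r phi u *v u)"
    using assms by (simp flip: inner_add_right)
  also have "\<dots> = char_forms u $ i \<bullet> (char_dr phi u $ i *\<^sub>R x + char_dphi r phi u $ i *\<^sub>R y)
      - char_source u $ i"
    by (simp flip: dot_lmul_matrix add: char_covectors_matA char_covectors_matB char_covectors_matC
        inner_add_right)
  finally show ?thesis by simp
qed

lemma char_covectors_nonzero: "char_covectors u $ i \<noteq> 0"
  using exhaust_4[of i]
  by (auto simp: char_covectors_def vec_eq_iff forall_4)

lemma char_dr_nonzero:
  assumes "det (matA r phi u) \<noteq> 0"
  shows "char_dr phi u $ i \<noteq> 0"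
proof
  assume "char_dr phi u $ i = 0"
  then have "transpose (matA r phi u) *v char_covectors u $ i = 0"
    by (simp add: char_covectors_matA)
  moreover have "invertible (transpose (matA r phi u))"
    using assms by (simp add: invertible_det_nz)
  ultimately show False
    using char_covectors_nonzero invertible_left_inverse matrix_left_invertible_ker by metis
qed

definition char_forms_inv :: "real^4 \<Rightarrow> real^4^4" where
  "char_forms_inv u = vector [
     vector [1, 0, 0, 0],
     vector [- u$3 / 6, 1/2, 0, 0],
     vector [- 5 * u$2, 0, 0, 1],
     vector [11 * u$2 * u$3 / 6, - 3 * u$2 / 2, 1/2, - u$3 / 3]]"

lemma char_forms_inv: "char_forms_inv u ** char_forms u = mat 1"
  by (simp add: vec_eq_iff forall_4 matrix_matrix_mult_def sum_4 mat_def char_forms_inv_def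
      char_forms_def field_simps)

definition char_forms_deriv :: "real^4 \<Rightarrow> real^4 \<Rightarrow> real^4^4" where
  "char_forms_deriv u h = vector [
     0,
     vector [h$3 / 3, 0, 0, 0],
     vector [2 * (h$2 * u$3 + u$2 * h$3) / 3, 6 * h$2, 2 * h$3 / 3, 0],
     vector [5 * h$2, 0, 0, 0]]"

lemma has_derivative_char_forms:
  assumes "(f has_derivative f') (at x within S)"
  shows "((\<lambda>x. char_forms (f x)) has_derivative (\<lambda>h. char_forms_deriv (f x) (f' h)))
    (at x within S)"
  unfolding char_forms_def char_forms_deriv_def
  by (auto intro!: derivative_eq_intros assms simp: fun_eq_iff vec_eq_iff forall_4 algebra_simps)

lemma linear_char_forms_deriv: "linear (char_forms_deriv u)"
  using has_derivative_linear[OF has_derivative_char_forms[OF has_derivative_ident[of "at u"]]]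
  by simp

section \<open>Two solutions agree near the initial circle\<close>

locale two_solutions =
  fixes Om :: "(real \<times> real) set"
    and U V :: "real \<times> real \<Rightarrow> real^4"
    and DU DV :: "real \<times> real \<Rightarrow> real \<times> real \<Rightarrow> real^4"
  assumes open_Om: "open Om"
    and radius_nonzero: "\<And>p. p \<in> Om \<Longrightarrow> fst p \<noteq> 0"
    and U_deriv: "\<And>p. p \<in> Om \<Longrightarrow> (U has_derivative DU p) (at p)"
    and V_deriv: "\<And>p. p \<in> Om \<Longrightarrow> (V has_derivative DV p) (at p)"
    and DU_cont: "\<And>h. continuous_on Om (\<lambda>p. DU p h)"
    and DV_cont: "\<And>h. continuous_on Om (\<lambda>p. DV p h)"
    and U_solves: "\<And>p. p \<in> Om \<Longrightarrow> matA (fst p) (snd p) (U p) *v DU p (1, 0)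
      + matB (fst p) (snd p) (U p) *v DU p (0, 1) + matC (fst p) (snd p) (U p) *v U p = 0"
    and V_solves: "\<And>p. p \<in> Om \<Longrightarrow> matA (fst p) (snd p) (V p) *v DV p (1, 0)
      + matB (fst p) (snd p) (V p) *v DV p (0, 1) + matC (fst p) (snd p) (V p) *v V p = 0"
begin

definition char_var :: "4 \<Rightarrow> real \<times> real \<Rightarrow> real" where
  "char_var i p = char_forms (U p) $ i \<bullet> (U p - V p)"

definition char_var_deriv :: "4 \<Rightarrow> real \<times> real \<Rightarrow> real \<times> real \<Rightarrow> real" where
  "char_var_deriv i p h =
    char_forms_deriv (U p) (DU p h) $ i \<bullet> (U p - V p) + char_forms (U p) $ i \<bullet> (DU p h - DV p h)"

abbreviation speed_r :: "real \<times> real \<Rightarrow> real^4" where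
  "speed_r p \<equiv> char_dr (snd p) (U p)"

abbreviation speed_phi :: "real \<times> real \<Rightarrow> real^4" where
  "speed_phi p \<equiv> char_dphi (fst p) (snd p) (U p)"

text \<open>In the derivative of \<open>char_var i\<close> along the \<open>i\<close>-th characteristic of \<open>U\<close>, the derivatives
  of \<open>U\<close> are eliminated with its characteristic equation; those of \<open>V\<close> only enter as coefficients,
  so \<open>residual p\<close> is a smooth function of \<open>u\<close>.\<close>

definition residual :: "real \<times> real \<Rightarrow> real^4 \<Rightarrow> real^4" where
  "residual p u = (\<chi> i.
    (speed_r p $ i *\<^sub>R char_forms_deriv (U p) (DU p (1, 0)) $ i
      + speed_phi p $ i *\<^sub>R char_forms_deriv (U p) (DU p (0, 1)) $ i) \<bullet> u
    + char_source u $ i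
    - char_forms u $ i \<bullet> (char_dr (snd p) u $ i *\<^sub>R DV p (1, 0)
      + char_dphi (fst p) (snd p) u $ i *\<^sub>R DV p (0, 1)))"

lemma continuous_on_U: "continuous_on Om U" and continuous_on_V: "continuous_on Om V"
  using U_deriv V_deriv
  by (meson continuous_at_imp_continuous_on has_derivative_continuous)+

lemma char_var_has_derivative:
  assumes "p \<in> Om"
  shows "(char_var i has_derivative char_var_deriv i p) (at p)"
proof -
  have "((\<lambda>x. char_forms (U x)) has_derivative (\<lambda>h. char_forms_deriv (U p) (DU p h))) (at p)"
    by (rule has_derivative_char_forms[OF U_deriv[OF assms]])
  then show ?thesis
    unfolding char_var_def[abs_def] char_var_deriv_def
    by (auto intro!: derivative_eq_intros U_deriv V_deriv assms simp: fun_eq_iff)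
qed

lemma char_var_transport:
  assumes "p \<in> Om"
  shows "char_var_deriv i p (speed_r p $ i, speed_phi p $ i)
    = residual p (U p) $ i - residual p (V p) $ i"
proof -
  let ?a = "speed_r p $ i" and ?b = "speed_phi p $ i"
  let ?Ur = "DU p (1, 0)" and ?Uf = "DU p (0, 1)" and ?Vr = "DV p (1, 0)" and ?Vf = "DV p (0, 1)"
  let ?Lr = "char_forms_deriv (U p) ?Ur $ i" and ?Lf = "char_forms_deriv (U p) ?Uf $ i"
  have lin: "linear (DU p)" "linear (DV p)"
    using U_deriv[OF assms] V_deriv[OF assms] by (simp_all add: has_derivative_linear)
  have "char_var_deriv i p (?a, ?b) = (?a *\<^sub>R ?Lr + ?b *\<^sub>R ?Lf) \<bullet> (U p - V p)
      + char_forms (U p) $ i \<bullet> (?a *\<^sub>R ?Ur + ?b *\<^sub>R ?Uf)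
      - char_forms (U p) $ i \<bullet> (?a *\<^sub>R ?Vr + ?b *\<^sub>R ?Vf)"
    unfolding char_var_deriv_def linear_apply_pair[OF lin(1), of ?a ?b]
      linear_apply_pair[OF lin(2), of ?a ?b]
    by (simp add: linear_add[OF linear_char_forms_deriv] linear_scale[OF linear_char_forms_deriv]
        inner_diff_right)
  also have "char_forms (U p) $ i \<bullet> (?a *\<^sub>R ?Ur + ?b *\<^sub>R ?Uf) = char_source (U p) $ i"
    by (rule char_equation[OF U_solves[OF assms]])
  also have "(?a *\<^sub>R ?Lr + ?b *\<^sub>R ?Lf) \<bullet> (U p - V p) + char_source (U p) $ i
      - char_forms (U p) $ i \<bullet> (?a *\<^sub>R ?Vr + ?b *\<^sub>R ?Vf)
      = residual p (U p) $ i - residual p (V p) $ i"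
    using char_equation[OF V_solves[OF assms], of i]
    unfolding residual_def by (simp add: inner_diff_right)
  finally show ?thesis .
qed

lemma solutions_diff_eq: "U p - V p = char_forms_inv (U p) *v (\<chi> j. char_var j p)"
proof -
  have "(\<chi> j. char_var j p) = char_forms (U p) *v (U p - V p)"
    by (simp add: vec_eq_iff char_var_def matrix_vector_mult_def inner_vec_def)
  then show ?thesis
    by (simp add: matrix_vector_mul_assoc char_forms_inv)
qed

lemma diff_bounded_by_solutions:
  assumes "compact B" "B \<subseteq> Om"
  shows "diff_bounded_by B (\<lambda>p. \<Sum>j\<in>UNIV. \<bar>char_var j p\<bar>) U V"
proof -
  have contU: "continuous_on B U" and contV: "continuous_on B V"
    using continuous_on_subset[OF continuous_on_U assms(2)]
      continuous_on_subset[OF continuous_on_V assms(2)] .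
  have "continuous_on B (\<lambda>p. \<Sum>i\<in>UNIV. \<Sum>j\<in>UNIV. \<bar>char_forms_inv (U p) $ i $ j\<bar>)"
    unfolding char_forms_inv_def by (intro continuous_intros contU) simp_all
  then obtain C where "C \<ge> 0"
    and C: "\<And>p. p \<in> B \<Longrightarrow> norm (\<Sum>i\<in>UNIV. \<Sum>j\<in>UNIV. \<bar>char_forms_inv (U p) $ i $ j\<bar>) \<le> C"
    by (rule continuous_on_compact_bound[OF assms(1)]) blast
  have "norm (U p - V p) \<le> C * (\<Sum>j\<in>UNIV. \<bar>char_var j p\<bar>)" if "p \<in> B" for p
  proof -
    let ?M = "char_forms_inv (U p)" and ?q = "\<chi> j. char_var j p"
    have "norm (U p - V p) \<le> onorm ((*v) ?M) * norm ?q"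
      unfolding solutions_diff_eq[of p] by (rule onorm[OF matrix_vector_mul_bounded_linear])
    also have "\<dots> \<le> C * (\<Sum>j\<in>UNIV. \<bar>char_var j p\<bar>)"
    proof (rule mult_mono)
      show "onorm ((*v) ?M) \<le> C"
        using onorm_le_matrix_component_sum[of ?M] C[OF that] by simp
      show "norm ?q \<le> (\<Sum>j\<in>UNIV. \<bar>char_var j p\<bar>)"
        using norm_le_l1_cart[of ?q] by simp
    qed (simp_all add: \<open>C \<ge> 0\<close>)
    finally show ?thesis .
  qed
  with contU contV show ?thesis
    unfolding diff_bounded_by_def by (intro conjI exI[of _ C]) auto
qed

lemma diff_bounded_by_residual:
  assumes "compact B" "B \<subseteq> Om" "diff_bounded_by B e U V"
  shows "diff_bounded_by B e (\<lambda>p. residual p (U p)) (\<lambda>p. residual p (V p))"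
proof -
  have cont: "continuous_on B U" "\<And>h. continuous_on B (\<lambda>p. DU p h)" "\<And>h. continuous_on B (\<lambda>p. DV p h)"
    using continuous_on_subset[OF continuous_on_U assms(2)] continuous_on_subset[OF DU_cont assms(2)]
      continuous_on_subset[OF DV_cont assms(2)] by blast+
  have "\<And>p. p \<in> B \<Longrightarrow> fst p \<noteq> 0"
    using assms(2) radius_nonzero by blast
  then show ?thesis
    unfolding residual_def char_forms_deriv_def char_forms_def char_source_def char_dr_def
      char_dphi_def
    by (intro diff_bounded_by_intros assms(1,3) cont continuous_intros) auto
qed

lemma continuous_on_speeds:
  assumes "B \<subseteq> Om"
  shows "continuous_on B speed_r" "continuous_on B speed_phi"
proof -
  have "continuous_on B U" "\<And>p. p \<in> B \<Longrightarrow> fst p \<noteq> 0"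
    using continuous_on_subset[OF continuous_on_U assms] radius_nonzero assms by auto
  then show "continuous_on B speed_r" "continuous_on B speed_phi"
    unfolding char_dr_def char_dphi_def by (auto intro!: continuous_intros)
qed

lemma nondegenerate_cball:
  assumes "(c, \<phi>0) \<in> Om" "det (matA c \<phi>0 (U (c, \<phi>0))) \<noteq> 0"
  obtains \<epsilon> where "\<epsilon> > 0" "cball (c, \<phi>0) \<epsilon> \<subseteq> Om"
    "\<And>p i. p \<in> cball (c, \<phi>0) \<epsilon> \<Longrightarrow> speed_r p $ i \<noteq> 0"
proof -
  define g where "g p = (\<Prod>i\<in>UNIV. speed_r p $ i)" for p
  have "continuous_on Om g"
    unfolding g_def by (intro continuous_intros continuous_on_speeds) simp
  then have "open (Om \<inter> g -` (- {0}))"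
    using open_Om by (rule continuous_open_preimage) auto
  moreover have "(c, \<phi>0) \<in> Om \<inter> g -` (- {0})"
    using assms char_dr_nonzero by (auto simp: g_def)
  ultimately obtain \<epsilon> where "\<epsilon> > 0" and \<epsilon>: "ball (c, \<phi>0) \<epsilon> \<subseteq> Om \<inter> g -` (- {0})"
    by (meson openE)
  have sub: "cball (c, \<phi>0) (\<epsilon> / 2) \<subseteq> ball (c, \<phi>0) \<epsilon>"
    using \<open>\<epsilon> > 0\<close> by (intro cball_subset_ball_iff[THEN iffD2]) simp
  show ?thesis
  proof (rule that[of "\<epsilon> / 2"])
    show "\<epsilon> / 2 > 0" "cball (c, \<phi>0) (\<epsilon> / 2) \<subseteq> Om"
      using \<open>\<epsilon> > 0\<close> sub \<epsilon> by auto
    fix p i assume "p \<in> cball (c, \<phi>0) (\<epsilon> / 2)"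
    then have "g p \<noteq> 0"
      using sub \<epsilon> by blast
    then show "speed_r p $ i \<noteq> 0"
      by (simp add: g_def)
  qed
qed

lemma slope_bound:
  assumes "compact B" "B \<subseteq> Om" "\<And>p i. p \<in> B \<Longrightarrow> speed_r p $ i \<noteq> 0"
  obtains L where "L \<ge> 1" "\<And>p i. p \<in> B \<Longrightarrow> \<bar>speed_phi p $ i / speed_r p $ i\<bar> \<le> L"
proof -
  have "continuous_on B (\<lambda>p. \<chi> i. speed_phi p $ i / speed_r p $ i)"
    by (intro continuous_intros continuous_on_speeds assms(2)) (use assms(3) in auto)
  then obtain C where C: "\<And>p. p \<in> B \<Longrightarrow> norm (\<chi> i. speed_phi p $ i / speed_r p $ i) \<le> C"
    using continuous_on_compact_bound[OF assms(1)] by blast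
  show ?thesis
  proof (rule that[of "max 1 C"])
    fix p i assume "p \<in> B"
    have "\<bar>speed_phi p $ i / speed_r p $ i\<bar> = \<bar>(\<chi> i. speed_phi p $ i / speed_r p $ i) $ i\<bar>"
      by simp
    also have "\<dots> \<le> max 1 C"
      using component_le_norm_cart C[OF \<open>p \<in> B\<close>] max.cobounded2 order_trans by metis
    finally show "\<bar>speed_phi p $ i / speed_r p $ i\<bar> \<le> max 1 C" .
  qed simp
qed

lemma transport_estimate:
  assumes "compact B" "B \<subseteq> Om" "\<And>p i. p \<in> B \<Longrightarrow> speed_r p $ i \<noteq> 0"
  obtains K where "\<And>p i. p \<in> B \<Longrightarrow>
    \<bar>char_var_deriv i p (1, speed_phi p $ i / speed_r p $ i)\<bar> \<le> K * (\<Sum>j\<in>UNIV. \<bar>char_var j p\<bar>)"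
proof -
  obtain K where K: "\<And>p. p \<in> B \<Longrightarrow>
      norm (residual p (U p) - residual p (V p)) \<le> K * (\<Sum>j\<in>UNIV. \<bar>char_var j p\<bar>)"
    by (rule diff_bounded_byE[OF diff_bounded_by_residual[OF assms(1,2)
        diff_bounded_by_solutions[OF assms(1,2)]]]) blast
  have "continuous_on B (\<lambda>p. \<chi> i. 1 / speed_r p $ i)"
    by (intro continuous_intros continuous_on_speeds assms(2)) (use assms(3) in auto)
  then obtain C where "C \<ge> 0" and C: "\<And>p. p \<in> B \<Longrightarrow> norm (\<chi> i. 1 / speed_r p $ i) \<le> C"
    by (rule continuous_on_compact_bound[OF assms(1)]) blast
  show ?thesis
  proof (rule that[of "C * K"])
    fix p i assume "p \<in> B"
    let ?a = "speed_r p $ i" and ?b = "speed_phi p $ i"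
    have "linear (char_var_deriv i p)"
      using char_var_has_derivative \<open>p \<in> B\<close> assms(2) by (blast intro: has_derivative_linear)
    then have "char_var_deriv i p (1, ?b / ?a) = (1 / ?a) * char_var_deriv i p (?a, ?b)"
      using linear_scale[of "char_var_deriv i p" "1 / ?a" "(?a, ?b)"] assms(3)[OF \<open>p \<in> B\<close>] by simp
    also have "\<dots> = (1 / ?a) * (residual p (U p) - residual p (V p)) $ i"
      using \<open>p \<in> B\<close> assms(2) by (auto simp: char_var_transport)
    finally have "\<bar>char_var_deriv i p (1, ?b / ?a)\<bar>
        = \<bar>(\<chi> i. 1 / speed_r p $ i) $ i\<bar> * \<bar>(residual p (U p) - residual p (V p)) $ i\<bar>"
      by (simp add: abs_mult)
    also have "\<dots> \<le> C * (K * (\<Sum>j\<in>UNIV. \<bar>char_var j p\<bar>))"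
      using order_trans[OF component_le_norm_cart C[OF \<open>p \<in> B\<close>]]
        order_trans[OF component_le_norm_cart K[OF \<open>p \<in> B\<close>]] \<open>C \<ge> 0\<close>
      by (rule mult_mono) simp
    finally show "\<bar>char_var_deriv i p (1, ?b / ?a)\<bar> \<le> C * K * (\<Sum>j\<in>UNIV. \<bar>char_var j p\<bar>)"
      by (simp add: mult.assoc)
  qed
qed

lemma transport_system_char_var:
  assumes "cball (c, \<phi>0) \<epsilon> \<subseteq> Om" "L \<ge> 1"
    and slope: "\<And>p i. p \<in> cball (c, \<phi>0) \<epsilon> \<Longrightarrow> \<bar>speed_phi p $ i / speed_r p $ i\<bar> \<le> L"
    and transport: "\<And>p i. p \<in> cball (c, \<phi>0) \<epsilon> \<Longrightarrow>
      \<bar>char_var_deriv i p (1, speed_phi p $ i / speed_r p $ i)\<bar> \<le> K * (\<Sum>j\<in>UNIV. \<bar>char_var j p\<bar>)"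
    and initial: "\<And>\<phi>. (c, \<phi>) \<in> Om \<Longrightarrow> U (c, \<phi>) = V (c, \<phi>)"
  shows "transport_system c \<phi>0 \<epsilon> L K char_var char_var_deriv
    (\<lambda>i p. speed_phi p $ i / speed_r p $ i)"
proof
  have D: "diamond c \<phi>0 \<epsilon> L \<subseteq> cball (c, \<phi>0) \<epsilon>"
    by (rule diamond_subset_cball[OF assms(2)])
  fix i p assume p: "p \<in> diamond c \<phi>0 \<epsilon> L"
  then show "(char_var i has_derivative char_var_deriv i p) (at p)"
    using D assms(1) by (blast intro: char_var_has_derivative)
  show "\<bar>speed_phi p $ i / speed_r p $ i\<bar> \<le> L"
    "\<bar>char_var_deriv i p (1, speed_phi p $ i / speed_r p $ i)\<bar> \<le> K * (\<Sum>j\<in>UNIV. \<bar>char_var j p\<bar>)"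
    using p D slope transport by blast+
  assume "fst p = c"
  then have "p = (c, snd p)" "(c, snd p) \<in> Om"
    using p D assms(1) by (auto simp: prod_eq_iff)
  then show "char_var i p = 0"
    using initial by (metis char_var_def diff_self inner_zero_right)
qed (use assms(2) in simp)

lemma local_uniqueness:
  assumes "(c, \<phi>0) \<in> Om" "det (matA c \<phi>0 (U (c, \<phi>0))) \<noteq> 0"
    and "\<And>\<phi>. (c, \<phi>) \<in> Om \<Longrightarrow> U (c, \<phi>) = V (c, \<phi>)"
  shows "\<exists>\<delta>>0. \<forall>p\<in>ball (c, \<phi>0) \<delta>. U p = V p"
proof -
  obtain \<epsilon> where "\<epsilon> > 0" and B: "cball (c, \<phi>0) \<epsilon> \<subseteq> Om"
    and nz: "\<And>p i. p \<in> cball (c, \<phi>0) \<epsilon> \<Longrightarrow> speed_r p $ i \<noteq> 0"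
    using nondegenerate_cball[OF assms(1,2)] by blast
  obtain L where "L \<ge> 1"
    and L: "\<And>p i. p \<in> cball (c, \<phi>0) \<epsilon> \<Longrightarrow> \<bar>speed_phi p $ i / speed_r p $ i\<bar> \<le> L"
    using slope_bound[OF compact_cball B nz] by blast
  obtain K where K: "\<And>p i. p \<in> cball (c, \<phi>0) \<epsilon> \<Longrightarrow>
      \<bar>char_var_deriv i p (1, speed_phi p $ i / speed_r p $ i)\<bar> \<le> K * (\<Sum>j\<in>UNIV. \<bar>char_var j p\<bar>)"
    using transport_estimate[OF compact_cball B nz] by blast
  interpret transport_system c \<phi>0 \<epsilon> L K char_var char_var_deriv
    "\<lambda>i p. speed_phi p $ i / speed_r p $ i"
    by (rule transport_system_char_var[OF B \<open>L \<ge> 1\<close> L K assms(3)])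
  have "U p = V p" if "p \<in> ball (c, \<phi>0) (\<epsilon> / (1 + L))" for p
  proof -
    have "p \<in> diamond c \<phi>0 \<epsilon> L"
      using ball_subset_diamond[of L c \<phi>0 \<epsilon>] \<open>L \<ge> 1\<close> that by auto
    then have "(\<chi> j. char_var j p) = 0"
      by (simp add: vec_eq_iff vanishes)
    then show ?thesis
      using solutions_diff_eq[of p] by simp
  qed
  moreover have "\<epsilon> / (1 + L) > 0"
    using \<open>\<epsilon> > 0\<close> \<open>L \<ge> 1\<close> by simp
  ultimately show ?thesis
    by blast
qed

end

lemma smooth_on_imp_C1:
  assumes "smooth_on S f"
  obtains f' where "\<And>x. x \<in> S \<Longrightarrow> (f has_derivative f' x) (at x)" "\<And>v. continuous_on S (\<lambda>x. f' x v)"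
proof -
  have "Ck_on (Suc 0) S f"
    using assms by (simp add: smooth_on_def)
  then show ?thesis
    using that by auto
qed

lemma solves_on_has_derivative:
  assumes "solves_on S U" "p \<in> S" "(U has_derivative DU) (at p)"
  shows "matA (fst p) (snd p) (U p) *v DU (1, 0) + matB (fst p) (snd p) (U p) *v DU (0, 1)
    + matC (fst p) (snd p) (U p) *v U p = 0"
proof -
  have "DU = frechet_derivative U (at p)"
    by (rule frechet_derivative_at[OF assms(3)])
  with assms(1,2) show ?thesis
    unfolding solves_on_def d_r_def d_phi_def by simp
qed

lemma two_solutions_intersection:
  assumes "open SU" "open SV" "\<forall>p\<in>SU. fst p > 0"
    and "smooth_on SU U" "solves_on SU U" "smooth_on SV V" "solves_on SV V"
  obtains DU DV where "two_solutions (SU \<inter> SV) U V DU DV"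
proof -
  obtain DU where DU: "\<And>p. p \<in> SU \<Longrightarrow> (U has_derivative DU p) (at p)"
    "\<And>h. continuous_on SU (\<lambda>p. DU p h)"
    using smooth_on_imp_C1[OF assms(4)] by blast
  obtain DV where DV: "\<And>p. p \<in> SV \<Longrightarrow> (V has_derivative DV p) (at p)"
    "\<And>h. continuous_on SV (\<lambda>p. DV p h)"
    using smooth_on_imp_C1[OF assms(6)] by blast
  have "two_solutions (SU \<inter> SV) U V DU DV"
  proof
    show "open (SU \<inter> SV)"
      using assms(1,2) by (rule open_Int)
    fix p assume p: "p \<in> SU \<inter> SV"
    then show "fst p \<noteq> 0"
      using assms(3) by auto
    show "(U has_derivative DU p) (at p)" "(V has_derivative DV p) (at p)"
      using p DU(1) DV(1) by auto
    show "matA (fst p) (snd p) (U p) *v DU p (1, 0) + matB (fst p) (snd p) (U p) *v DU p (0, 1)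
        + matC (fst p) (snd p) (U p) *v U p = 0"
      using p assms(5) DU(1) by (blast intro: solves_on_has_derivative)
    show "matA (fst p) (snd p) (V p) *v DV p (1, 0) + matB (fst p) (snd p) (V p) *v DV p (0, 1)
        + matC (fst p) (snd p) (V p) *v V p = 0"
      using p assms(7) DV(1) by (blast intro: solves_on_has_derivative)
  next
    fix h
    show "continuous_on (SU \<inter> SV) (\<lambda>p. DU p h)" "continuous_on (SU \<inter> SV) (\<lambda>p. DV p h)"
      using continuous_on_subset[OF DU(2)] continuous_on_subset[OF DV(2)] by blast+
  qed
  then show ?thesis
    by (rule that)
qed

theorem theorem3p3:
  fixes U V :: "real \<times> real \<Rightarrow> real^4" and c :: real and SU SV :: "(real \<times> real) set"
  assumes "c > 0"
    and "open SU" and "\<forall>phi. (c, phi) \<in> SU" and "\<forall>p\<in>SU. fst p > 0"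
    and "open SV" and "\<forall>phi. (c, phi) \<in> SV" and "\<forall>p\<in>SV. fst p > 0"
    and "smooth_on SU U" and "solves_on SU U"
    and "smooth_on SV V" and "solves_on SV V"
    and "\<forall>phi. det (matA c phi (U (c, phi))) \<noteq> 0"
    and "\<forall>phi. U (c, phi) = V (c, phi)"
  shows "\<exists>W. open W \<and> (\<forall>phi. (c, phi) \<in> W) \<and> (\<forall>p\<in>W. U p = V p)"
proof -
  obtain DU DV where "two_solutions (SU \<inter> SV) U V DU DV"
    using two_solutions_intersection[OF assms(2,5,4,8-11)] by blast
  then interpret two_solutions "SU \<inter> SV" U V DU DV .
  have "\<exists>\<delta>>0. \<forall>p\<in>ball (c, phi) \<delta>. U p = V p" for phi
    using assms(3,6,12,13) by (intro local_uniqueness) auto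
  then show ?thesis
    by (intro exI[of _ "interior {p. U p = V p}"])
      (auto simp: mem_interior subset_eq dest: interior_subset[THEN subsetD])
qed

end
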